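(* Let $G$ be a finite group, $\pi$ a real representation of $G$, and $\pi'=\pi\oplus\det\pi$, where $\det\pi=\det\circ\pi$ is regarded as a one-dimensional real representation. Then $\pi$ is spinorial if and only if $\pi'$ is spinorial.
   Context: A real representation on a Euclidean space $V$ is regarded as a homomorphism $\pi:G\to\mathrm{O}(V)$; it is spinorial if there is a homomorphism $\hat\pi:G\to\mathrm{Pin}(V)$ with $\rho\circ\hat\pi=\pi$, where $\mathrm{Pin}(V)$ is the Pin group of $V$ (from the Clifford algebra with $v^2=-|v|^2$) and $\rho:\mathrm{Pin}(V)\to\mathrm{O}(V)$ the standard double cover with kernel $\{\pm1\}$. *)

theory Defs
  imports "HOL-Algebra.Group" "Jordan_Normal_Form.Determinant"
begin

definition orth_mat :: "nat \<Rightarrow> real mat \<Rightarrow> bool" where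
  "orth_mat n A \<longleftrightarrow> A \<in> carrier_mat n n \<and> transpose_mat A * A = 1\<^sub>m n"

definition orth_rep :: "('g, 'b) monoid_scheme \<Rightarrow> nat \<Rightarrow> ('g \<Rightarrow> real mat) \<Rightarrow> bool" where
  "orth_rep G n \<pi> \<longleftrightarrow>
     (\<forall>g\<in>carrier G. orth_mat n (\<pi> g)) \<and>
     (\<forall>g\<in>carrier G. \<forall>h\<in>carrier G. \<pi> (g \<otimes>\<^bsub>G\<^esub> h) = \<pi> g * \<pi> h)"

text \<open>Elements are coefficient functions on basis blades e_A, A a subset of {0..<n}
  (e_A = e_{a1} ... e_{ak} with a1 < ... < ak). With e_i e_j = - e_j e_i (i \<noteq> j) and
  e_i^2 = -1 one gets e_A e_B = (-1)^(#inversions + |A \<inter> B|) e_(A \<triangle> B).\<close>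

type_synonym cl = "nat set \<Rightarrow> real"

definition cl_sign :: "nat set \<Rightarrow> nat set \<Rightarrow> real" where
  "cl_sign A B = (-1) ^ (card {(a, b). a \<in> A \<and> b \<in> B \<and> b < a} + card (A \<inter> B))"

definition cl_mult :: "nat \<Rightarrow> cl \<Rightarrow> cl \<Rightarrow> cl" where
  "cl_mult n x y = (\<lambda>C. \<Sum>A\<in>Pow {..<n}. \<Sum>B\<in>Pow {..<n}.
      if (A - B) \<union> (B - A) = C then cl_sign A B * x A * y B else 0)"

definition cl_one :: cl where
  "cl_one = (\<lambda>A. if A = {} then 1 else 0)"

definition cl_vec :: "nat \<Rightarrow> real vec \<Rightarrow> cl" where
  "cl_vec n v = (\<lambda>A. if \<exists>i<n. A = {i} then v $ (THE i. A = {i}) else 0)"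

definition cl_alpha :: "cl \<Rightarrow> cl" where
  "cl_alpha x = (\<lambda>A. (-1) ^ card A * x A)"

text \<open>Pin(n): the subgroup of the units of Cl(R^n) generated by the unit vectors
  (finite products of unit vectors; closed under inverses since u^{-1} = -u).\<close>

inductive_set pin :: "nat \<Rightarrow> cl set" for n where
  pin_one: "cl_one \<in> pin n"
| pin_step: "x \<in> pin n \<Longrightarrow> v \<in> carrier_vec n \<Longrightarrow> v \<bullet> v = 1 \<Longrightarrow> cl_mult n x (cl_vec n v) \<in> pin n"

text \<open>rho : Pin(n) -> O(n), rho(x) v = alpha(x) v x^{-1}, i.e. the matrix A with
  alpha(x) v = (A v) x for all v (twisted adjoint action; unit vectors act by reflections,
  and ker rho = {1,-1}).\<close>

definition pin_rho :: "nat \<Rightarrow> cl \<Rightarrow> real mat" where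
  "pin_rho n x = (THE A. A \<in> carrier_mat n n \<and>
      (\<forall>v\<in>carrier_vec n. cl_mult n (cl_alpha x) (cl_vec n v) = cl_mult n (cl_vec n (A *\<^sub>v v)) x))"

definition spinorial :: "('g, 'b) monoid_scheme \<Rightarrow> nat \<Rightarrow> ('g \<Rightarrow> real mat) \<Rightarrow> bool" where
  "spinorial G n \<pi> \<longleftrightarrow>
     (\<exists>\<pi>h :: 'g \<Rightarrow> cl.
        (\<forall>g\<in>carrier G. \<pi>h g \<in> pin n \<and> pin_rho n (\<pi>h g) = \<pi> g) \<and>
        (\<forall>g\<in>carrier G. \<forall>h\<in>carrier G. \<pi>h (g \<otimes>\<^bsub>G\<^esub> h) = cl_mult n (\<pi>h g) (\<pi>h h)))"

definition det_sum :: "nat \<Rightarrow> ('g \<Rightarrow> real mat) \<Rightarrow> 'g \<Rightarrow> real mat" where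
  "det_sum n \<pi> g = four_block_mat (\<pi> g) (0\<^sub>m n 1) (0\<^sub>m 1 n) (mat 1 1 (\<lambda>_. det (\<pi> g)))"

end

theory Submission
  imports Defs
begin

text \<open>Let \<open>e\<close> be the last basis vector of \<open>R^(n+1)\<close>. Unit vectors are odd and act by
  reflections, so every \<open>x \<in> Pin(n)\<close> satisfies \<open>\<alpha>(x) = det(\<rho> x) x\<close>, and hence
  \<open>e x = det(\<rho> x) x e\<close>. Therefore the map sending \<open>x\<close> to \<open>x\<close> if \<open>det(\<rho> x) = 1\<close> and to \<open>x e\<close>
  otherwise is an injective homomorphism \<open>Pin(n) \<rightarrow> Pin(n+1)\<close> lying over
  \<open>A \<mapsto> A \<oplus> det A\<close>; composing with it turns a lift of \<open>\<pi>\<close> into a lift of \<open>\<pi>'\<close>.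
  Conversely, \<open>\<rho>\<close> maps \<open>Pin(n)\<close> onto \<open>O(n)\<close> (Cartan-Dieudonne) with kernel \<open>{1, -1}\<close>, so
  every element of \<open>Pin(n+1)\<close> over \<open>A \<oplus> det A\<close> is the image of an element of \<open>Pin(n)\<close>
  over \<open>A\<close>, and a lift of \<open>\<pi>'\<close> pulls back along the injective homomorphism to a lift of \<open>\<pi>\<close>.\<close>

section \<open>Signs of blade products\<close>

definition card_sign :: "'a set \<Rightarrow> real" where
  "card_sign A = (-1) ^ card A"

definition inversions :: "nat set \<Rightarrow> nat set \<Rightarrow> (nat \<times> nat) set" where
  "inversions A B = {(a, b). a \<in> A \<and> b \<in> B \<and> b < a}"

lemma cl_sign_eq: "cl_sign A B = card_sign (inversions A B) * card_sign (A \<inter> B)"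
  unfolding cl_sign_def card_sign_def inversions_def by (simp add: power_add)

lemma card_sign_sq [simp]: "card_sign A * card_sign A = 1"
  unfolding card_sign_def by (simp flip: power_add)

lemma card_sign_sym_diff:
  assumes "finite A" "finite B"
  shows "card_sign (sym_diff A B) = card_sign A * card_sign B"
proof -
  have "card A = card (A - B) + card (A \<inter> B)" "card B = card (B - A) + card (A \<inter> B)"
    using assms by (simp_all add: card_Diff_subset_Int Int_commute card_mono le_add_diff_inverse2
      del: card_Diff_subset)
  moreover have "card (sym_diff A B) = card (A - B) + card (B - A)"
    using assms by (subst card_Un_disjoint) auto
  ultimately show ?thesis
    using card_sign_sq[of "A \<inter> B"] unfolding card_sign_def by (simp add: power_add algebra_simps)
qed

lemma finite_inversions: "finite A \<Longrightarrow> finite B \<Longrightarrow> finite (inversions A B)"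
  unfolding inversions_def by (rule finite_subset[of _ "A \<times> B"]) auto

lemma cl_sign_sym_diff_left:
  assumes "finite A" "finite B" "finite C"
  shows "cl_sign (sym_diff A B) C = cl_sign A C * cl_sign B C"
proof -
  have "inversions (sym_diff A B) C = sym_diff (inversions A C) (inversions B C)"
    "sym_diff A B \<inter> C = sym_diff (A \<inter> C) (B \<inter> C)"
    unfolding inversions_def by auto
  then show ?thesis
    using assms by (simp add: cl_sign_eq card_sign_sym_diff finite_inversions algebra_simps)
qed

lemma cl_sign_sym_diff_right:
  assumes "finite A" "finite B" "finite C"
  shows "cl_sign A (sym_diff B C) = cl_sign A B * cl_sign A C"
proof -
  have "inversions A (sym_diff B C) = sym_diff (inversions A B) (inversions A C)"
    "A \<inter> sym_diff B C = sym_diff (A \<inter> B) (A \<inter> C)"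
    unfolding inversions_def by auto
  then show ?thesis
    using assms by (simp add: cl_sign_eq card_sign_sym_diff finite_inversions algebra_simps)
qed

lemma cl_sign_sq [simp]: "cl_sign A B * cl_sign A B = 1"
  using card_sign_sq[of "inversions A B"] card_sign_sq[of "A \<inter> B"]
  unfolding cl_sign_eq by (simp add: algebra_simps)

lemma cl_sign_empty [simp]: "cl_sign A {} = 1" "cl_sign {} A = 1"
  by (simp_all add: cl_sign_def)

lemma cl_sign_cocycle:
  assumes "finite A" "finite C" "finite D"
  shows "cl_sign C (sym_diff C D) * cl_sign A (sym_diff A C)
    = cl_sign A (sym_diff A D) * cl_sign (sym_diff A C) (sym_diff C D)"
  using assms cl_sign_sq[of A D]
  by (simp add: cl_sign_sym_diff_left cl_sign_sym_diff_right algebra_simps)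

text \<open>Clifford conjugation (reversion composed with the grade involution) multiplies
  \<open>e\<^sub>A\<close> by \<open>conj_sign A\<close>.\<close>

definition conj_sign :: "nat set \<Rightarrow> real" where
  "conj_sign A = card_sign (inversions A A) * card_sign A"

lemma conj_sign_sym_diff:
  assumes "finite A" "finite B"
  shows "conj_sign (sym_diff A B) * cl_sign A B = cl_sign B A * conj_sign A * conj_sign B"
proof -
  have "inversions (sym_diff A B) (sym_diff A B)
    = sym_diff (sym_diff (inversions A A) (inversions A B))
      (sym_diff (inversions B A) (inversions B B))"
    unfolding inversions_def by auto
  then have "conj_sign (sym_diff A B) = card_sign (inversions A A) * card_sign (inversions A B)
      * card_sign (inversions B A) * card_sign (inversions B B) * card_sign A * card_sign B"
    unfolding conj_sign_def using assms
    by (simp add: card_sign_sym_diff finite_inversions algebra_simps)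
  then show ?thesis
    using card_sign_sq[of "inversions A B"]
    unfolding conj_sign_def cl_sign_eq by (simp add: Int_commute algebra_simps)
qed

section \<open>The Clifford algebra \<open>Cl(R^m)\<close>\<close>

definition cl_space :: "nat \<Rightarrow> cl set" where
  "cl_space m = {x. \<forall>A. \<not> A \<subseteq> {..<m} \<longrightarrow> x A = 0}"

definition cl_blade :: "nat set \<Rightarrow> cl" where
  "cl_blade B = (\<lambda>A. if A = B then 1 else 0)"

definition cl_scale :: "real \<Rightarrow> cl \<Rightarrow> cl" where
  "cl_scale c x = (\<lambda>A. c * x A)"

definition cl_add :: "cl \<Rightarrow> cl \<Rightarrow> cl" where
  "cl_add x y = (\<lambda>A. x A + y A)"

lemma finite_subset_lessThan: "A \<subseteq> {..<(m::nat)} \<Longrightarrow> finite A"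
  using finite_subset by blast

lemma sym_diff_cancel [simp]:
  "sym_diff A (sym_diff A B) = B" "sym_diff (sym_diff B A) A = B" "sym_diff (sym_diff A B) A = B"
  by blast+

lemma cl_mult_apply:
  "cl_mult m x y C = (if C \<subseteq> {..<m}
     then \<Sum>A\<in>Pow {..<m}. cl_sign A (sym_diff A C) * x A * y (sym_diff A C) else 0)"
proof -
  have inner: "(\<Sum>B\<in>Pow {..<m}. if sym_diff A B = C then cl_sign A B * x A * y B else 0)
     = (if C \<subseteq> {..<m} then cl_sign A (sym_diff A C) * x A * y (sym_diff A C) else 0)"
    if "A \<in> Pow {..<m}" for A
  proof -
    have "sym_diff A B = C \<longleftrightarrow> B = sym_diff A C" for B by blast
    moreover have "sym_diff A C \<in> Pow {..<m} \<longleftrightarrow> C \<subseteq> {..<m}" using that by blast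
    ultimately show ?thesis by (simp add: sum.delta cong: if_cong)
  qed
  have "cl_mult m x y C = (\<Sum>A\<in>Pow {..<m}.
      if C \<subseteq> {..<m} then cl_sign A (sym_diff A C) * x A * y (sym_diff A C) else 0)"
    unfolding cl_mult_def by (rule sum.cong[OF refl]) (rule inner)
  then show ?thesis by simp
qed

lemma sum_Pow_sym_diff_reindex:
  assumes "A \<subseteq> {..<m}"
  shows "(\<Sum>B\<in>Pow {..<m}. g B) = (\<Sum>C\<in>Pow {..<m}. g (sym_diff A C))"
  by (rule sum.reindex_bij_witness[where i="sym_diff A" and j="sym_diff A"]) (use assms in auto)

lemma cl_mult_mult_left_apply:
  assumes D: "D \<subseteq> {..<m}"
  shows "cl_mult m (cl_mult m x y) z D = (\<Sum>A\<in>Pow {..<m}. \<Sum>C\<in>Pow {..<m}. cl_sign A (sym_diff A D)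
    * cl_sign (sym_diff A C) (sym_diff C D) * x A * y (sym_diff A C) * z (sym_diff C D))"
proof -
  let ?P = "Pow {..<m}"
  have "cl_mult m (cl_mult m x y) z D = (\<Sum>C\<in>?P. cl_sign C (sym_diff C D) *
      (\<Sum>A\<in>?P. cl_sign A (sym_diff A C) * x A * y (sym_diff A C)) * z (sym_diff C D))"
    using D by (simp only: cl_mult_apply[of m "cl_mult m x y"] if_True)
      (intro sum.cong refl, simp add: cl_mult_apply[of m x y])
  also have "\<dots> = (\<Sum>C\<in>?P. \<Sum>A\<in>?P. cl_sign C (sym_diff C D) * cl_sign A (sym_diff A C)
      * x A * y (sym_diff A C) * z (sym_diff C D))"
    by (simp add: sum_distrib_left sum_distrib_right mult.assoc)
  also have "\<dots> = (\<Sum>A\<in>?P. \<Sum>C\<in>?P. cl_sign C (sym_diff C D) * cl_sign A (sym_diff A C)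
      * x A * y (sym_diff A C) * z (sym_diff C D))"
    by (rule sum.swap)
  also have "\<dots> = (\<Sum>A\<in>?P. \<Sum>C\<in>?P. cl_sign A (sym_diff A D)
      * cl_sign (sym_diff A C) (sym_diff C D) * x A * y (sym_diff A C) * z (sym_diff C D))"
  proof (intro sum.cong refl)
    fix A C assume "A \<in> ?P" "C \<in> ?P"
    then have "cl_sign C (sym_diff C D) * cl_sign A (sym_diff A C)
        = cl_sign A (sym_diff A D) * cl_sign (sym_diff A C) (sym_diff C D)"
      using D by (intro cl_sign_cocycle) (auto intro: finite_subset_lessThan)
    then show "cl_sign C (sym_diff C D) * cl_sign A (sym_diff A C) * x A * y (sym_diff A C)
      * z (sym_diff C D)
        = cl_sign A (sym_diff A D) * cl_sign (sym_diff A C) (sym_diff C D) * x A * y (sym_diff A C)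
          * z (sym_diff C D)"
      by simp
  qed
  finally show ?thesis .
qed

lemma cl_mult_mult_right_apply:
  assumes D: "D \<subseteq> {..<m}"
  shows "cl_mult m x (cl_mult m y z) D = (\<Sum>A\<in>Pow {..<m}. \<Sum>C\<in>Pow {..<m}. cl_sign A (sym_diff A D)
    * cl_sign (sym_diff A C) (sym_diff C D) * x A * y (sym_diff A C) * z (sym_diff C D))"
proof -
  have inner: "cl_mult m y z (sym_diff A D) = (\<Sum>C\<in>Pow {..<m}.
      cl_sign (sym_diff A C) (sym_diff C D) * y (sym_diff A C) * z (sym_diff C D))"
    if A: "A \<in> Pow {..<m}" for A
  proof -
    have AD: "sym_diff A D \<subseteq> {..<m}" using A D by blast
    have CD: "sym_diff (sym_diff A C) (sym_diff A D) = sym_diff C D" for C by blast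
    have "cl_mult m y z (sym_diff A D) = (\<Sum>B\<in>Pow {..<m}.
        cl_sign B (sym_diff B (sym_diff A D)) * y B * z (sym_diff B (sym_diff A D)))"
      using AD by (simp only: cl_mult_apply if_True)
    also have "\<dots> = (\<Sum>C\<in>Pow {..<m}. cl_sign (sym_diff A C) (sym_diff (sym_diff A C) (sym_diff A D))
        * y (sym_diff A C) * z (sym_diff (sym_diff A C) (sym_diff A D)))"
      using A by (intro sum_Pow_sym_diff_reindex) blast
    finally show ?thesis by (simp only: CD)
  qed
  show ?thesis
    using D by (simp only: cl_mult_apply[of m x] if_True)
      (intro sum.cong refl, simp add: inner sum_distrib_left mult_ac)
qed

lemma cl_mult_assoc: "cl_mult m (cl_mult m x y) z = cl_mult m x (cl_mult m y z)"
proof (rule ext)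
  fix D
  show "cl_mult m (cl_mult m x y) z D = cl_mult m x (cl_mult m y z) D"
    by (cases "D \<subseteq> {..<m}")
      (simp only: cl_mult_mult_left_apply cl_mult_mult_right_apply, simp add: cl_mult_apply)
qed

lemma cl_mult_in_space: "cl_mult m x y \<in> cl_space m"
  unfolding cl_space_def by (simp add: cl_mult_apply)

lemma cl_one_in_space: "cl_one \<in> cl_space m"
  unfolding cl_space_def cl_one_def by auto

lemma cl_vec_in_space: "cl_vec m v \<in> cl_space m"
  unfolding cl_space_def cl_vec_def by auto

lemma cl_space_Suc: "x \<in> cl_space n \<Longrightarrow> x \<in> cl_space (Suc n)"
  unfolding cl_space_def using lessThan_Suc by blast

lemma cl_one_eq_blade: "cl_one = cl_blade {}"
  unfolding cl_one_def cl_blade_def by auto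

lemma cl_vec_unit_vec: "i < m \<Longrightarrow> cl_vec m (unit_vec m i) = cl_blade {i}"
  unfolding cl_vec_def cl_blade_def by (rule ext) (auto split: if_splits)

lemma cl_mult_blade_left:
  assumes B: "B \<subseteq> {..<m}"
  shows "cl_mult m (cl_blade B) y C
    = (if C \<subseteq> {..<m} then cl_sign B (sym_diff B C) * y (sym_diff B C) else 0)"
proof (cases "C \<subseteq> {..<m}")
  case True
  have "cl_mult m (cl_blade B) y C
      = (\<Sum>A\<in>Pow {..<m}. cl_sign A (sym_diff A C) * cl_blade B A * y (sym_diff A C))"
    using True by (simp add: cl_mult_apply)
  also have "\<dots> = (\<Sum>A\<in>Pow {..<m}. if A = B then cl_sign A (sym_diff A C) * y (sym_diff A C) else 0)"
    by (rule sum.cong) (auto simp: cl_blade_def)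
  also have "\<dots> = cl_sign B (sym_diff B C) * y (sym_diff B C)"
    using B by (subst sum.delta) auto
  finally show ?thesis using True by simp
qed (simp add: cl_mult_apply)

lemma cl_mult_blade_right:
  assumes B: "B \<subseteq> {..<m}"
  shows "cl_mult m x (cl_blade B) C
    = (if C \<subseteq> {..<m} then cl_sign (sym_diff B C) B * x (sym_diff B C) else 0)"
proof (cases "C \<subseteq> {..<m}")
  case True
  have "cl_mult m x (cl_blade B) C
      = (\<Sum>A\<in>Pow {..<m}. cl_sign A (sym_diff A C) * x A * cl_blade B (sym_diff A C))"
    using True by (simp add: cl_mult_apply)
  also have "\<dots> = (\<Sum>A\<in>Pow {..<m}. if A = sym_diff B C then cl_sign A (sym_diff A C) * x A else 0)"
    by (rule sum.cong) (auto simp: cl_blade_def)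
  also have "\<dots> = cl_sign (sym_diff B C) B * x (sym_diff B C)"
    using True B by (subst sum.delta) auto
  finally show ?thesis using True by simp
qed (simp add: cl_mult_apply)

lemma cl_mult_one_left: "x \<in> cl_space m \<Longrightarrow> cl_mult m cl_one x = x"
  unfolding cl_one_eq_blade by (rule ext) (auto simp: cl_mult_blade_left cl_space_def)

lemma cl_mult_one_right: "x \<in> cl_space m \<Longrightarrow> cl_mult m x cl_one = x"
  unfolding cl_one_eq_blade by (rule ext) (auto simp: cl_mult_blade_right cl_space_def)

lemma cl_mult_scale_left: "cl_mult m (cl_scale c x) y = cl_scale c (cl_mult m x y)"
  unfolding cl_scale_def by (rule ext) (simp add: cl_mult_apply sum_distrib_left algebra_simps)

lemma cl_mult_scale_right: "cl_mult m x (cl_scale c y) = cl_scale c (cl_mult m x y)"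
  unfolding cl_scale_def by (rule ext) (simp add: cl_mult_apply sum_distrib_left algebra_simps)

lemma cl_mult_add_left: "cl_mult m (cl_add x y) z = cl_add (cl_mult m x z) (cl_mult m y z)"
  unfolding cl_add_def
    by (rule ext) (simp add: cl_mult_apply sum.distrib distrib_left distrib_right)

lemma cl_scale_scale [simp]: "cl_scale a (cl_scale b x) = cl_scale (a * b) x"
  unfolding cl_scale_def by auto

lemma cl_scale_one [simp]: "cl_scale 1 x = x"
  unfolding cl_scale_def by auto

lemma cl_scale_cancel: "c \<noteq> 0 \<Longrightarrow> cl_scale c x = cl_scale c y \<longleftrightarrow> x = y"
  unfolding cl_scale_def fun_eq_iff by simp

lemma cl_alpha_mult: "cl_alpha (cl_mult m x y) = cl_mult m (cl_alpha x) (cl_alpha y)"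
proof (rule ext)
  fix C
  show "cl_alpha (cl_mult m x y) C = cl_mult m (cl_alpha x) (cl_alpha y) C"
  proof (cases "C \<subseteq> {..<m}")
    case C: True
    have signs: "(-1) ^ card C * (cl_sign A (sym_diff A C) * x A * y (sym_diff A C))
        = cl_sign A (sym_diff A C) * ((-1) ^ card A * x A)
          * ((-1) ^ card (sym_diff A C) * y (sym_diff A C))"
      if "A \<in> Pow {..<m}" for A
    proof -
      have "card_sign A * card_sign (sym_diff A C) = card_sign C"
        using that C card_sign_sq[of A]
        by (simp add: card_sign_sym_diff finite_subset_lessThan mult.assoc[symmetric])
      then have "(-1::real) ^ card A * (-1) ^ card (sym_diff A C) = (-1) ^ card C"
        unfolding card_sign_def .
      moreover have "cl_sign A (sym_diff A C) * ((-1) ^ card A * x A) * ((-1) ^ card (sym_diff A C)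
          * y (sym_diff A C)) = ((-1) ^ card A * (-1) ^ card (sym_diff A C))
          * (cl_sign A (sym_diff A C) * x A * y (sym_diff A C))"
        by (simp only: mult_ac)
      ultimately show ?thesis by simp
    qed
    have "cl_alpha (cl_mult m x y) C
        = (\<Sum>A\<in>Pow {..<m}. (-1) ^ card C * (cl_sign A (sym_diff A C) * x A * y (sym_diff A C)))"
      using C unfolding cl_alpha_def by (simp add: cl_mult_apply sum_distrib_left)
    also have "\<dots> = (\<Sum>A\<in>Pow {..<m}. cl_sign A (sym_diff A C) * ((-1) ^ card A * x A)
        * ((-1) ^ card (sym_diff A C) * y (sym_diff A C)))"
      by (intro sum.cong refl signs)
    also have "\<dots> = cl_mult m (cl_alpha x) (cl_alpha y) C"
      using C by (simp add: cl_mult_apply cl_alpha_def)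
    finally show ?thesis .
  qed (simp add: cl_mult_apply cl_alpha_def)
qed

lemma cl_alpha_one: "cl_alpha cl_one = cl_one"
  unfolding cl_alpha_def cl_one_def by auto

lemma cl_alpha_scale: "cl_alpha (cl_scale c x) = cl_scale c (cl_alpha x)"
  unfolding cl_alpha_def cl_scale_def by (auto simp: algebra_simps)

lemma cl_alpha_vec: "cl_alpha (cl_vec m v) = cl_scale (-1) (cl_vec m v)"
  unfolding cl_alpha_def cl_scale_def cl_vec_def by (rule ext) auto

definition cl_conj :: "cl \<Rightarrow> cl" where
  "cl_conj x = (\<lambda>A. conj_sign A * x A)"

lemma cl_conj_mult: "cl_conj (cl_mult m x y) = cl_mult m (cl_conj y) (cl_conj x)"
proof (rule ext)
  fix C
  show "cl_conj (cl_mult m x y) C = cl_mult m (cl_conj y) (cl_conj x) C"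
  proof (cases "C \<subseteq> {..<m}")
    case C: True
    have "cl_mult m (cl_conj y) (cl_conj x) C = (\<Sum>B\<in>Pow {..<m}.
        cl_sign B (sym_diff B C) * (conj_sign B * y B)
          * (conj_sign (sym_diff B C) * x (sym_diff B C)))"
      using C by (simp add: cl_mult_apply cl_conj_def)
    also have "\<dots> = (\<Sum>A\<in>Pow {..<m}. cl_sign (sym_diff C A) A * (conj_sign (sym_diff C A)
        * y (sym_diff C A)) * (conj_sign A * x A))"
      using C by (subst sum_Pow_sym_diff_reindex[of C]) simp_all
    also have "\<dots> = (\<Sum>A\<in>Pow {..<m}.
      conj_sign C * (cl_sign A (sym_diff A C) * x A * y (sym_diff A C)))"
    proof (intro sum.cong refl)
      fix A assume "A \<in> Pow {..<m}"
      then have "conj_sign (sym_diff A (sym_diff A C)) * cl_sign A (sym_diff A C)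
          = cl_sign (sym_diff A C) A * conj_sign A * conj_sign (sym_diff A C)"
        using C by (intro conj_sign_sym_diff) (auto intro: finite_subset_lessThan)
      moreover have "sym_diff C A = sym_diff A C" by blast
      ultimately show "cl_sign (sym_diff C A) A * (conj_sign (sym_diff C A) * y (sym_diff C A))
          * (conj_sign A * x A) = conj_sign C * (cl_sign A (sym_diff A C) * x A * y (sym_diff A C))"
        by (simp add: mult_ac)
    qed
    finally show ?thesis
      using C by (simp only: cl_conj_def cl_mult_apply[of m x y] if_True sum_distrib_left)
  qed (simp add: cl_mult_apply cl_conj_def)
qed

lemma cl_conj_scale: "cl_conj (cl_scale c x) = cl_scale c (cl_conj x)"
  unfolding cl_conj_def cl_scale_def by (auto simp: algebra_simps)

lemma cl_conj_one: "cl_conj cl_one = cl_one"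
  unfolding cl_conj_def cl_one_def conj_sign_def card_sign_def inversions_def by auto

lemma cl_conj_vec: "cl_conj (cl_vec m v) = cl_scale (-1) (cl_vec m v)"
proof -
  have "inversions {i} {i} = {}" for i
    unfolding inversions_def by auto
  then have "conj_sign {i} = -1" for i
    unfolding conj_sign_def card_sign_def by simp
  then show ?thesis
    unfolding cl_conj_def cl_scale_def cl_vec_def by (auto intro!: ext)
qed

lemma cl_conj_in_space: "x \<in> cl_space m \<Longrightarrow> cl_conj x \<in> cl_space m"
  unfolding cl_space_def cl_conj_def by auto

lemma cl_vec_singleton: "i < m \<Longrightarrow> cl_vec m v {i} = v $ i"
  unfolding cl_vec_def by auto

lemma cl_vec_apply: "cl_vec m v B = (\<Sum>j<m. if B = {j} then v $ j else 0)"
proof (cases "\<exists>i<m. B = {i}")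
  case True
  then obtain i where "i < m" "B = {i}" by auto
  then show ?thesis by (simp add: cl_vec_singleton)
next
  case False
  then show ?thesis unfolding cl_vec_def by (auto intro!: sum.neutral)
qed

lemma cl_vec_inj:
  assumes "v \<in> carrier_vec m" "w \<in> carrier_vec m" "cl_vec m v = cl_vec m w"
  shows "v = w"
proof (rule eq_vecI)
  fix i assume "i < dim_vec w"
  then have "i < m" using assms by auto
  then show "v $ i = w $ i"
    using assms(3) cl_vec_singleton[of i m v] cl_vec_singleton[of i m w] by simp
qed (use assms in auto)

lemma cl_mult_vec_left:
  assumes C: "C \<subseteq> {..<m}"
  shows "cl_mult m (cl_vec m u) y C
    = (\<Sum>i<m. u $ i * cl_sign {i} (sym_diff {i} C) * y (sym_diff {i} C))"
proof -
  have "cl_mult m (cl_vec m u) y C = (\<Sum>A\<in>Pow {..<m}. \<Sum>j<m.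
      if A = {j} then cl_sign A (sym_diff A C) * u $ j * y (sym_diff A C) else 0)"
    using C unfolding cl_mult_apply cl_vec_apply
    by (simp add: sum_distrib_left sum_distrib_right if_distrib if_distribR cong: if_cong)
  also have "\<dots> = (\<Sum>j<m. \<Sum>A\<in>Pow {..<m}.
      if A = {j} then cl_sign A (sym_diff A C) * u $ j * y (sym_diff A C) else 0)"
    by (rule sum.swap)
  also have "\<dots> = (\<Sum>i<m. u $ i * cl_sign {i} (sym_diff {i} C) * y (sym_diff {i} C))"
    by (intro sum.cong refl) (simp add: sum.delta)
  finally show ?thesis .
qed

lemma cl_mult_vec_vec:
  assumes C: "C \<subseteq> {..<m}"
  shows "cl_mult m (cl_vec m u) (cl_vec m v) C =
    (\<Sum>i<m. \<Sum>j<m. if C = sym_diff {i} {j} then u $ i * v $ j * cl_sign {i} {j} else 0)"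
  unfolding cl_mult_vec_left[OF C] cl_vec_apply sum_distrib_left
proof (intro sum.cong refl)
  fix i j
  have "sym_diff {i} C = {j} \<longleftrightarrow> C = sym_diff {i} {j}" by blast
  then show "u $ i * cl_sign {i} (sym_diff {i} C) * (if sym_diff {i} C = {j} then v $ j else 0) =
      (if C = sym_diff {i} {j} then u $ i * v $ j * cl_sign {i} {j} else 0)"
    by auto
qed

lemma cl_sign_singletons: "cl_sign {i} {j} = (if j \<le> i then -1 else 1)"
proof -
  have "{(a, b). a \<in> {i} \<and> b \<in> {j} \<and> b < a} = (if j < i then {(i, j)} else {})" by auto
  then show ?thesis unfolding cl_sign_def by auto
qed

lemma cl_vec_anticommute:
  assumes u: "u \<in> carrier_vec m" and v: "v \<in> carrier_vec m"
  shows "cl_add (cl_mult m (cl_vec m u) (cl_vec m v)) (cl_mult m (cl_vec m v) (cl_vec m u))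
    = cl_scale (- 2 * (u \<bullet> v)) cl_one"
proof (rule ext)
  fix C
  show "cl_add (cl_mult m (cl_vec m u) (cl_vec m v)) (cl_mult m (cl_vec m v) (cl_vec m u)) C
      = cl_scale (- 2 * (u \<bullet> v)) cl_one C"
  proof (cases "C \<subseteq> {..<m}")
    case False
    then have "C \<noteq> {}" by auto
    with False show ?thesis by (simp add: cl_add_def cl_scale_def cl_mult_apply cl_one_def)
  next
    case True
    have swap: "(\<Sum>i<m. \<Sum>j<m. if C = sym_diff {i} {j} then v $ i * u $ j * cl_sign {i} {j} else 0)
       = (\<Sum>i<m. \<Sum>j<m. if C = sym_diff {i} {j} then u $ i * v $ j * cl_sign {j} {i} else 0)"
      by (subst sum.swap) (intro sum.cong refl, auto simp: Un_commute)
    have "cl_add (cl_mult m (cl_vec m u) (cl_vec m v)) (cl_mult m (cl_vec m v) (cl_vec m u)) C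
      = (\<Sum>i<m. \<Sum>j<m. if C = sym_diff {i} {j}
          then u $ i * v $ j * (cl_sign {i} {j} + cl_sign {j} {i}) else 0)"
      unfolding cl_add_def cl_mult_vec_vec[OF True] swap sum.distrib[symmetric]
      by (intro sum.cong refl) (auto simp: algebra_simps)
    also have "\<dots> = (\<Sum>i<m. \<Sum>j<m. if j = i then (if C = {} then -2 * (u $ i * v $ i) else 0) else 0)"
      by (intro sum.cong refl) (auto simp: cl_sign_singletons)
    also have "\<dots> = cl_scale (- 2 * (u \<bullet> v)) cl_one C"
      using v unfolding cl_scale_def cl_one_def scalar_prod_def
      by (auto simp: sum.delta sum_distrib_left lessThan_atLeast0)
    finally show ?thesis .
  qed
qed

lemma cl_vec_unit_sq:
  assumes "u \<in> carrier_vec m" "u \<bullet> u = 1"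
  shows "cl_mult m (cl_vec m u) (cl_vec m u) = cl_scale (-1) cl_one"
  using cl_vec_anticommute[OF assms(1) assms(1)] assms(2)
  unfolding fun_eq_iff cl_add_def cl_scale_def by (auto simp: algebra_simps)

definition reflection_mat :: "nat \<Rightarrow> real vec \<Rightarrow> real mat" where
  "reflection_mat m u = mat m m (\<lambda>(i, j). (if i = j then 1 else 0) - 2 * (u $ i * u $ j))"

lemma reflection_mat_carrier [simp]: "reflection_mat m u \<in> carrier_mat m m"
  unfolding reflection_mat_def by simp

lemma reflection_mat_dim: "dim_row (reflection_mat m u) = m"
  unfolding reflection_mat_def by simp

lemma reflection_mat_mult_vec_carrier [simp]:
  "v \<in> carrier_vec m \<Longrightarrow> reflection_mat m u *\<^sub>v v \<in> carrier_vec m"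
  using mult_mat_vec_carrier reflection_mat_carrier by blast

lemma reflection_mat_mult_vec_index:
  assumes u: "u \<in> carrier_vec m" and v: "v \<in> carrier_vec m" and i: "i < m"
  shows "(reflection_mat m u *\<^sub>v v) $ i = v $ i - 2 * (u \<bullet> v) * u $ i"
proof -
  have "(reflection_mat m u *\<^sub>v v) $ i
      = (\<Sum>j\<in>{0..<m}. (if i = j then v $ j else 0) - 2 * u $ i * (u $ j * v $ j))"
    using i v unfolding reflection_mat_def
    by (auto simp: scalar_prod_def row_def algebra_simps intro!: sum.cong)
  also have "\<dots> = v $ i - 2 * u $ i * (u \<bullet> v)"
    using i u v by (simp add: sum_subtractf sum_distrib_left scalar_prod_def)
  finally show ?thesis by simp
qed

lemma cl_vec_reflection:
  assumes u: "u \<in> carrier_vec m" and v: "v \<in> carrier_vec m"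
  shows "cl_vec m (reflection_mat m u *\<^sub>v v)
    = cl_add (cl_vec m v) (cl_scale (- 2 * (u \<bullet> v)) (cl_vec m u))"
  unfolding cl_add_def cl_scale_def cl_vec_def
  by (rule ext) (auto simp: reflection_mat_mult_vec_index[OF u v])

lemma cl_twisted_conj_vec:
  assumes u: "u \<in> carrier_vec m" "u \<bullet> u = 1" and v: "v \<in> carrier_vec m"
  shows "cl_mult m (cl_alpha (cl_vec m u)) (cl_vec m v)
    = cl_mult m (cl_vec m (reflection_mat m u *\<^sub>v v)) (cl_vec m u)"
proof -
  have anti: "cl_mult m (cl_vec m u) (cl_vec m v) C + cl_mult m (cl_vec m v) (cl_vec m u) C
      = - 2 * (u \<bullet> v) * cl_one C" for C
    using cl_vec_anticommute[OF u(1) v] unfolding fun_eq_iff cl_add_def cl_scale_def by auto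
  show ?thesis
    unfolding cl_alpha_vec cl_vec_reflection[OF u(1) v] cl_mult_add_left cl_mult_scale_left
      cl_vec_unit_sq[OF u]
  proof (rule ext)
    fix C
    show "cl_scale (-1) (cl_mult m (cl_vec m u) (cl_vec m v)) C
      = cl_add (cl_mult m (cl_vec m v) (cl_vec m u))
        (cl_scale (- 2 * (u \<bullet> v)) (cl_scale (-1) cl_one)) C"
      using anti[of C] by (simp add: cl_add_def cl_scale_def algebra_simps)
  qed
qed

section \<open>The Pin group and the covering map \<open>\<rho>\<close>\<close>

lemma pin_in_space: "x \<in> pin m \<Longrightarrow> x \<in> cl_space m"
  by (induction rule: pin.induct) (auto simp: cl_one_in_space cl_mult_in_space)

lemma pin_mult: "y \<in> pin m \<Longrightarrow> x \<in> pin m \<Longrightarrow> cl_mult m x y \<in> pin m"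
proof (induction rule: pin.induct)
  case pin_one
  then show ?case by (simp add: cl_mult_one_right pin_in_space)
next
  case (pin_step y v)
  then show ?case by (simp add: cl_mult_assoc[symmetric] pin.pin_step)
qed

lemma pin_vec: "u \<in> carrier_vec m \<Longrightarrow> u \<bullet> u = 1 \<Longrightarrow> cl_vec m u \<in> pin m"
  using pin.pin_step[OF pin.pin_one, of u m] by (simp add: cl_mult_one_left cl_vec_in_space)

lemma pin_has_inverse:
  "x \<in> pin m \<Longrightarrow> \<exists>y\<in>cl_space m. cl_mult m x y = cl_one \<and> cl_mult m y x = cl_one"
proof (induction rule: pin.induct)
  case pin_one
  then show ?case by (intro bexI[of _ cl_one]) (simp_all add: cl_mult_one_left cl_one_in_space)
next
  case (pin_step x v)
  then obtain y where y: "y \<in> cl_space m" "cl_mult m x y = cl_one" "cl_mult m y x = cl_one" by auto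
  let ?u = "cl_vec m v"
  let ?y = "cl_mult m (cl_scale (-1) ?u) y"
  have u: "cl_mult m ?u ?u = cl_scale (-1) cl_one" using cl_vec_unit_sq pin_step by auto
  have "cl_mult m (cl_mult m x ?u) ?y = cl_mult m x (cl_mult m (cl_mult m ?u (cl_scale (-1) ?u)) y)"
    by (simp add: cl_mult_assoc)
  also have "\<dots> = cl_one"
    using u y by (simp add: cl_mult_scale_left cl_mult_scale_right cl_mult_one_left cl_one_in_space)
  finally have "cl_mult m (cl_mult m x ?u) ?y = cl_one" .
  moreover have "cl_mult m ?y (cl_mult m x ?u)
    = cl_mult m (cl_scale (-1) ?u) (cl_mult m (cl_mult m y x) ?u)"
    by (simp add: cl_mult_assoc)
  then have "cl_mult m ?y (cl_mult m x ?u) = cl_one"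
    using u y by (simp add: cl_mult_scale_left cl_mult_scale_right cl_mult_one_left cl_vec_in_space)
  ultimately show ?case using cl_mult_in_space by blast
qed

lemma pin_mult_conj: "x \<in> pin m \<Longrightarrow> cl_mult m x (cl_conj x) = cl_one"
proof (induction rule: pin.induct)
  case pin_one
  then show ?case by (simp add: cl_conj_one cl_mult_one_left cl_one_in_space)
next
  case (pin_step x v)
  let ?u = "cl_vec m v"
  have u: "cl_mult m ?u ?u = cl_scale (-1) cl_one" using cl_vec_unit_sq pin_step by auto
  have "cl_mult m (cl_mult m x ?u) (cl_conj (cl_mult m x ?u))
      = cl_mult m x (cl_mult m (cl_mult m ?u (cl_scale (-1) ?u)) (cl_conj x))"
    by (simp add: cl_mult_assoc cl_conj_mult cl_conj_vec)
  also have "\<dots> = cl_one"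
    using u pin_step pin_in_space[OF pin_step(1)]
    by (simp add: cl_mult_scale_left cl_mult_scale_right cl_mult_one_left cl_conj_in_space)
  finally show ?case .
qed

lemma pin_uminus:
  assumes "x \<in> pin m" "0 < m"
  shows "cl_scale (-1) x \<in> pin m"
proof -
  let ?e = "unit_vec m 0 :: real vec"
  have e: "?e \<in> carrier_vec m" "?e \<bullet> ?e = 1" using assms by auto
  have "cl_mult m (cl_mult m x (cl_vec m ?e)) (cl_vec m ?e) \<in> pin m"
    using assms e by (intro pin.pin_step) auto
  also have "cl_mult m (cl_mult m x (cl_vec m ?e)) (cl_vec m ?e) = cl_scale (-1) x"
    using cl_vec_unit_sq[OF e] pin_in_space[OF assms(1)]
    by (simp add: cl_mult_assoc cl_mult_scale_right cl_mult_one_right)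
  finally show ?thesis .
qed

definition twisted_adjoint :: "nat \<Rightarrow> cl \<Rightarrow> real mat \<Rightarrow> bool" where
  "twisted_adjoint m x A \<longleftrightarrow> A \<in> carrier_mat m m \<and>
     (\<forall>v\<in>carrier_vec m. cl_mult m (cl_alpha x) (cl_vec m v) = cl_mult m (cl_vec m (A *\<^sub>v v)) x)"

lemma mat_eq_by_mult_vec:
  fixes A B :: "'a::comm_ring_1 mat"
  assumes A: "A \<in> carrier_mat m m" and B: "B \<in> carrier_mat m m"
    and eq: "\<And>v. v \<in> carrier_vec m \<Longrightarrow> A *\<^sub>v v = B *\<^sub>v v"
  shows "A = B"
proof (rule eq_matI)
  fix i j assume "i < dim_row B" "j < dim_col B"
  moreover have "(A *\<^sub>v unit_vec m j) $ i = (B *\<^sub>v unit_vec m j) $ i"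
    using eq[of "unit_vec m j"] by simp
  ultimately show "A $$ (i, j) = B $$ (i, j)" using A B by simp
qed (use A B in auto)

lemma twisted_adjoint_unique:
  assumes x: "x \<in> pin m" and A: "twisted_adjoint m x A" and B: "twisted_adjoint m x B"
  shows "A = B"
proof -
  obtain y where y: "y \<in> cl_space m" "cl_mult m x y = cl_one" using pin_has_inverse[OF x] by auto
  show ?thesis
  proof (rule mat_eq_by_mult_vec)
    show "A \<in> carrier_mat m m" "B \<in> carrier_mat m m"
      using A B unfolding twisted_adjoint_def by auto
  next
    fix v :: "real vec" assume v: "v \<in> carrier_vec m"
    have "cl_mult m (cl_vec m (A *\<^sub>v v)) x = cl_mult m (cl_vec m (B *\<^sub>v v)) x"
      using A B v unfolding twisted_adjoint_def by auto
    then have "cl_mult m (cl_mult m (cl_vec m (A *\<^sub>v v)) x) y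
      = cl_mult m (cl_mult m (cl_vec m (B *\<^sub>v v)) x) y"
      by simp
    then have "cl_vec m (A *\<^sub>v v) = cl_vec m (B *\<^sub>v v)"
      by (simp add: cl_mult_assoc y cl_mult_one_right cl_vec_in_space)
    then show "A *\<^sub>v v = B *\<^sub>v v"
      using A B v unfolding twisted_adjoint_def by (intro cl_vec_inj[of _ m]) auto
  qed
qed

lemma twisted_adjoint_one: "twisted_adjoint m cl_one (1\<^sub>m m)"
  unfolding twisted_adjoint_def
    by (simp add: cl_alpha_one cl_mult_one_left cl_mult_one_right cl_vec_in_space)

lemma twisted_adjoint_vec:
  "u \<in> carrier_vec m \<Longrightarrow> u \<bullet> u = 1 \<Longrightarrow> twisted_adjoint m (cl_vec m u) (reflection_mat m u)"
  unfolding twisted_adjoint_def by (simp add: cl_twisted_conj_vec)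

lemma twisted_adjoint_mult:
  assumes A: "twisted_adjoint m x A" and B: "twisted_adjoint m y B"
  shows "twisted_adjoint m (cl_mult m x y) (A * B)"
  unfolding twisted_adjoint_def
proof (intro conjI ballI)
  have Ac: "A \<in> carrier_mat m m" and Bc: "B \<in> carrier_mat m m"
    using A B unfolding twisted_adjoint_def by auto
  then show "A * B \<in> carrier_mat m m" by simp
  fix v :: "real vec" assume v: "v \<in> carrier_vec m"
  have "cl_mult m (cl_alpha (cl_mult m x y)) (cl_vec m v)
      = cl_mult m (cl_alpha x) (cl_mult m (cl_alpha y) (cl_vec m v))"
    by (simp add: cl_alpha_mult cl_mult_assoc)
  also have "\<dots> = cl_mult m (cl_mult m (cl_alpha x) (cl_vec m (B *\<^sub>v v))) y"
    using B v unfolding twisted_adjoint_def by (simp add: cl_mult_assoc)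
  also have "\<dots> = cl_mult m (cl_vec m (A *\<^sub>v (B *\<^sub>v v))) (cl_mult m x y)"
    using A Bc v unfolding twisted_adjoint_def by (simp add: cl_mult_assoc)
  also have "A *\<^sub>v (B *\<^sub>v v) = (A * B) *\<^sub>v v"
    using Ac Bc v by (simp add: assoc_mult_mat_vec)
  finally show "cl_mult m (cl_alpha (cl_mult m x y)) (cl_vec m v)
      = cl_mult m (cl_vec m ((A * B) *\<^sub>v v)) (cl_mult m x y)" .
qed

lemma twisted_adjoint_scale: "twisted_adjoint m x A \<Longrightarrow> twisted_adjoint m (cl_scale c x) A"
  unfolding twisted_adjoint_def by (simp add: cl_alpha_scale cl_mult_scale_left cl_mult_scale_right)

lemma twisted_adjoint_exists: "x \<in> pin m \<Longrightarrow> \<exists>A. twisted_adjoint m x A"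
proof (induction rule: pin.induct)
  case pin_one
  then show ?case using twisted_adjoint_one by blast
next
  case (pin_step x v)
  then show ?case using twisted_adjoint_mult twisted_adjoint_vec by blast
qed

lemma pin_rho_eqI: "x \<in> pin m \<Longrightarrow> twisted_adjoint m x A \<Longrightarrow> pin_rho m x = A"
  unfolding pin_rho_def
  by (rule the_equality) (auto dest: twisted_adjoint_unique simp: twisted_adjoint_def[symmetric])

lemma pin_rho_twisted_adjoint: "x \<in> pin m \<Longrightarrow> twisted_adjoint m x (pin_rho m x)"
  using twisted_adjoint_exists pin_rho_eqI by metis

lemma pin_rho_carrier: "x \<in> pin m \<Longrightarrow> pin_rho m x \<in> carrier_mat m m"
  using pin_rho_twisted_adjoint unfolding twisted_adjoint_def by auto

lemma pin_rho_one: "pin_rho m cl_one = 1\<^sub>m m"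
  by (rule pin_rho_eqI) (auto intro: pin.pin_one twisted_adjoint_one)

lemma pin_rho_vec: "u \<in> carrier_vec m \<Longrightarrow> u \<bullet> u = 1 \<Longrightarrow> pin_rho m (cl_vec m u) = reflection_mat m u"
  by (rule pin_rho_eqI) (auto intro: pin_vec twisted_adjoint_vec)

lemma pin_rho_mult:
  "x \<in> pin m \<Longrightarrow> y \<in> pin m \<Longrightarrow> pin_rho m (cl_mult m x y) = pin_rho m x * pin_rho m y"
  by (rule pin_rho_eqI) (auto intro: pin_mult twisted_adjoint_mult pin_rho_twisted_adjoint)

lemma pin_rho_uminus: "x \<in> pin m \<Longrightarrow> 0 < m \<Longrightarrow> pin_rho m (cl_scale (-1) x) = pin_rho m x"
  by (rule pin_rho_eqI) (auto intro: pin_uminus twisted_adjoint_scale pin_rho_twisted_adjoint)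

lemma cl_sign_singleton_swap:
  assumes A: "finite A" and i: "i \<in> A"
  shows "card_sign A * cl_sign A {i} = - cl_sign {i} A"
proof -
  let ?P = "{a \<in> A. i < a}" and ?Q = "{b \<in> A. b < i}"
  have "inversions A {i} = (\<lambda>a. (a, i)) ` ?P" "inversions {i} A = Pair i ` ?Q"
    unfolding inversions_def by auto
  then have inv: "card (inversions A {i}) = card ?P" "card (inversions {i} A) = card ?Q"
    by (simp_all add: card_image inj_on_def)
  have "A = insert i (?P \<union> ?Q)" "i \<notin> ?P \<union> ?Q" "?P \<inter> ?Q = {}" using i by auto
  then have "card A = Suc (card ?P + card ?Q)"
    using A by (metis card_Un_disjoint card_insert_disjoint finite_Un finite_insert)
  moreover have "A \<inter> {i} = {i}" "{i} \<inter> A = {i}" using i by auto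
  ultimately have "card_sign A * cl_sign A {i} = card_sign ?P * card_sign ?Q * card_sign ?P"
    unfolding cl_sign_eq card_sign_def inv by (simp add: power_add)
  also have "\<dots> = card_sign ?Q"
    using card_sign_sq[of ?P] by (simp only: mult_ac)
  also have "\<dots> = - cl_sign {i} A"
    unfolding cl_sign_eq card_sign_def inv \<open>{i} \<inter> A = {i}\<close> by simp
  finally show ?thesis .
qed

text \<open>For \<open>i \<in> A\<close>, the coefficients of \<open>\<alpha>(z) e\<^sub>i\<close> and \<open>e\<^sub>i z\<close> at \<open>A - {i}\<close> are
  \<open>-z\<^sub>A\<close> and \<open>z\<^sub>A\<close> up to the same sign.\<close>

lemma twisted_central_scalar:
  assumes z: "z \<in> cl_space m"
    and comm: "\<And>v. v \<in> carrier_vec m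
      \<Longrightarrow> cl_mult m (cl_alpha z) (cl_vec m v) = cl_mult m (cl_vec m v) z"
  shows "z = cl_scale (z {}) cl_one"
proof (rule ext)
  fix A
  show "z A = cl_scale (z {}) cl_one A"
  proof (cases "A = {} \<or> \<not> A \<subseteq> {..<m}")
    case True
    then show ?thesis using z unfolding cl_space_def cl_scale_def cl_one_def by auto
  next
    case False
    then obtain i where i: "i \<in> A" and A: "A \<subseteq> {..<m}" by auto
    then have im: "{i} \<subseteq> {..<m}" by auto
    let ?D = "sym_diff A {i}"
    have D: "?D \<subseteq> {..<m}" and iD: "sym_diff {i} ?D = A" using A i by auto
    have "cl_mult m (cl_alpha z) (cl_blade {i}) ?D = cl_mult m (cl_blade {i}) z ?D"
      using comm[of "unit_vec m i"] im by (simp add: cl_vec_unit_vec)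
    then have "cl_sign A {i} * (card_sign A * z A) = cl_sign {i} A * z A"
      using D unfolding cl_mult_blade_right[OF im] cl_mult_blade_left[OF im] iD
        cl_alpha_def card_sign_def
      by simp
    then have "- cl_sign {i} A * z A = cl_sign {i} A * z A"
      using cl_sign_singleton_swap[OF finite_subset_lessThan[OF A] i] by (simp add: mult_ac)
    moreover have "cl_sign {i} A \<noteq> 0" unfolding cl_sign_def by simp
    ultimately show ?thesis using i unfolding cl_scale_def cl_one_def by auto
  qed
qed

text \<open>\<open>w\<^sup>-\<^sup>1 x\<close> commutes with all vectors in the twisted sense, hence is a scalar.\<close>

lemma pin_rho_eq_imp_scalar:
  assumes x: "x \<in> pin m" and w: "w \<in> pin m" and eq: "pin_rho m x = pin_rho m w"
  obtains c where "x = cl_scale c w"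
proof -
  let ?A = "pin_rho m x"
  obtain w' where w': "w' \<in> cl_space m" "cl_mult m w w' = cl_one" "cl_mult m w' w = cl_one"
    using pin_has_inverse[OF w] by auto
  have x_adj: "twisted_adjoint m x ?A" and w_adj: "twisted_adjoint m w ?A"
    using pin_rho_twisted_adjoint[OF x] pin_rho_twisted_adjoint[OF w] eq by simp_all
  let ?z = "cl_mult m w' x"
  have "cl_mult m (cl_alpha ?z) (cl_vec m v) = cl_mult m (cl_vec m v) ?z"
    if v: "v \<in> carrier_vec m" for v
  proof -
    have x_v: "cl_mult m (cl_alpha x) (cl_vec m v) = cl_mult m (cl_vec m (?A *\<^sub>v v)) x"
      and w_v: "cl_mult m (cl_alpha w) (cl_vec m v) = cl_mult m (cl_vec m (?A *\<^sub>v v)) w"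
      using x_adj w_adj v unfolding twisted_adjoint_def by auto
    have "cl_vec m (?A *\<^sub>v v) = cl_mult m (cl_mult m (cl_vec m (?A *\<^sub>v v)) w) w'"
      by (simp add: cl_mult_assoc w' cl_mult_one_right cl_vec_in_space)
    also have "\<dots> = cl_mult m (cl_mult m (cl_alpha w) (cl_vec m v)) w'" by (simp add: w_v)
    finally have Av: "cl_vec m (?A *\<^sub>v v) = cl_mult m (cl_mult m (cl_alpha w) (cl_vec m v)) w'" .
    have "cl_mult m (cl_alpha ?z) (cl_vec m v)
      = cl_mult m (cl_alpha w') (cl_mult m (cl_alpha x) (cl_vec m v))"
      by (simp add: cl_alpha_mult cl_mult_assoc)
    also have "\<dots> = cl_mult m (cl_mult m (cl_alpha w') (cl_alpha w)) (cl_mult m (cl_vec m v) ?z)"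
      unfolding x_v by (subst Av) (simp add: cl_mult_assoc)
    also have "cl_mult m (cl_alpha w') (cl_alpha w) = cl_one"
      by (simp add: cl_alpha_mult[symmetric] w' cl_alpha_one)
    finally show ?thesis by (simp add: cl_mult_one_left cl_mult_in_space)
  qed
  then have z: "?z = cl_scale (?z {}) cl_one"
    by (rule twisted_central_scalar[OF cl_mult_in_space])
  have "x = cl_mult m (cl_mult m w w') x"
    using pin_in_space[OF x] by (simp add: w' cl_mult_one_left)
  also have "\<dots> = cl_mult m w ?z" by (simp add: cl_mult_assoc)
  also have "\<dots> = cl_scale (?z {}) w"
    using pin_in_space[OF w] by (subst z) (simp add: cl_mult_scale_right cl_mult_one_right)
  finally show ?thesis by (rule that)
qed

text \<open>The scalar is \<open>\<plusminus>1\<close> because Pin elements have norm \<open>x (cl_conj x) = 1\<close>.\<close>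

lemma pin_rho_eq_imp_sign:
  assumes x: "x \<in> pin m" and w: "w \<in> pin m" and eq: "pin_rho m x = pin_rho m w"
  shows "x = w \<or> x = cl_scale (-1) w"
proof -
  obtain c where xw: "x = cl_scale c w" using pin_rho_eq_imp_scalar[OF assms] .
  have "cl_one = cl_mult m x (cl_conj x)" using pin_mult_conj[OF x] by simp
  also have "\<dots> = cl_scale (c * c) (cl_mult m w (cl_conj w))"
    by (simp add: xw cl_conj_scale cl_mult_scale_left cl_mult_scale_right)
  also have "\<dots> = cl_scale (c * c) cl_one" using pin_mult_conj[OF w] by simp
  finally have "cl_one {} = cl_scale (c * c) cl_one {}" by simp
  then have "c * c = 1" by (simp add: cl_scale_def cl_one_def)
  then have "c = 1 \<or> c = -1" by (metis mult_cancel_left1 mult_minus1_right square_eq_iff)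
  then show ?thesis using xw by auto
qed

section \<open>Reflections generate \<open>O(m)\<close>\<close>

lemma orth_mat_carrier: "orth_mat m A \<Longrightarrow> A \<in> carrier_mat m m"
  unfolding orth_mat_def by auto

lemma orth_mat_mult:
  assumes A: "orth_mat m A" and B: "orth_mat m B"
  shows "orth_mat m (A * B)"
proof -
  have Ac: "A \<in> carrier_mat m m" and Bc: "B \<in> carrier_mat m m" using A B orth_mat_carrier by auto
  have "transpose_mat (A * B) * (A * B) = transpose_mat B * (transpose_mat A * A) * B"
    using Ac Bc by (simp add: transpose_mult[of A m m B m] assoc_mult_mat[of _ m m _ m _ m])
  also have "\<dots> = 1\<^sub>m m" using A B Bc unfolding orth_mat_def by simp
  finally show ?thesis using Ac Bc unfolding orth_mat_def by simp
qed

lemma orth_mat_inner: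
  assumes Q: "orth_mat m Q" and v: "v \<in> carrier_vec m" and w: "w \<in> carrier_vec m"
  shows "(Q *\<^sub>v v) \<bullet> (Q *\<^sub>v w) = v \<bullet> w"
proof -
  have Qc: "Q \<in> carrier_mat m m" using Q orth_mat_carrier by auto
  have "(Q *\<^sub>v v) \<bullet> (Q *\<^sub>v w) = (transpose_mat Q *\<^sub>v (Q *\<^sub>v v)) \<bullet> w"
    using Qc v w by (simp add: transpose_vec_mult_scalar[of Q m m w "Q *\<^sub>v v"])
  also have "transpose_mat Q *\<^sub>v (Q *\<^sub>v v) = (transpose_mat Q * Q) *\<^sub>v v"
    using Qc v by (simp add: assoc_mult_mat_vec[of _ m m _ m])
  also have "\<dots> = v" using Q v unfolding orth_mat_def by simp
  finally show ?thesis .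
qed

lemma orth_mat_det: "orth_mat m A \<Longrightarrow> det A = 1 \<or> det A = -1"
proof -
  assume A: "orth_mat m A"
  then have "det (transpose_mat A * A) = 1" unfolding orth_mat_def by simp
  then have "det A * det A = 1"
    using orth_mat_carrier[OF A] by (simp add: det_mult[of _ m] det_transpose)
  then show ?thesis by (metis mult_cancel_left1 mult_minus1_right square_eq_iff)
qed

lemma reflection_mat_involutive:
  assumes u: "u \<in> carrier_vec m" "u \<bullet> u = 1"
  shows "reflection_mat m u * reflection_mat m u = 1\<^sub>m m"
proof (rule mat_eq_by_mult_vec[of _ m])
  fix v :: "real vec" assume v: "v \<in> carrier_vec m"
  have Rv: "reflection_mat m u *\<^sub>v v \<in> carrier_vec m" using v by simp
  have uRv: "u \<bullet> (reflection_mat m u *\<^sub>v v) = - (u \<bullet> v)"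
  proof -
    have "u \<bullet> (reflection_mat m u *\<^sub>v v) = (\<Sum>j\<in>{0..<m}. u $ j * (reflection_mat m u *\<^sub>v v) $ j)"
      by (simp only: scalar_prod_def dim_mult_mat_vec reflection_mat_dim)
    also have "\<dots> = (\<Sum>j\<in>{0..<m}. u $ j * v $ j - 2 * (u \<bullet> v) * (u $ j * u $ j))"
      using u v by (intro sum.cong refl) (simp add: reflection_mat_mult_vec_index algebra_simps)
    also have "\<dots> = u \<bullet> v - 2 * (u \<bullet> v) * (u \<bullet> u)"
      using u v by (simp add: sum_subtractf scalar_prod_def flip: sum_distrib_left)
    finally show ?thesis using u by simp
  qed
  have "(reflection_mat m u * reflection_mat m u) *\<^sub>v v
    = reflection_mat m u *\<^sub>v (reflection_mat m u *\<^sub>v v)"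
    using v by (simp add: assoc_mult_mat_vec[of _ m m _ m])
  also have "\<dots> = v"
  proof (rule eq_vecI)
    fix i assume "i < dim_vec v"
    then have "i < m" using v by simp
    then show "(reflection_mat m u *\<^sub>v (reflection_mat m u *\<^sub>v v)) $ i = v $ i"
      using u v Rv by (simp add: reflection_mat_mult_vec_index uRv)
  qed (use v in \<open>simp add: reflection_mat_dim\<close>)
  finally show "(reflection_mat m u * reflection_mat m u) *\<^sub>v v = 1\<^sub>m m *\<^sub>v v" using v by simp
qed (simp_all add: mult_carrier_mat[OF reflection_mat_carrier reflection_mat_carrier])

lemma orth_reflection_mat: "u \<in> carrier_vec m \<Longrightarrow> u \<bullet> u = 1 \<Longrightarrow> orth_mat m (reflection_mat m u)"
proof -
  have "transpose_mat (reflection_mat m u) = reflection_mat m u"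
    unfolding reflection_mat_def by (rule eq_matI) (auto simp: mult.commute)
  then show "u \<in> carrier_vec m \<Longrightarrow> u \<bullet> u = 1 \<Longrightarrow> orth_mat m (reflection_mat m u)"
    unfolding orth_mat_def by (simp add: reflection_mat_involutive)
qed

text \<open>Two distinct unit vectors are swapped by the reflection along their difference, which
  vanishes wherever they agree.\<close>

lemma reflection_swap:
  assumes a: "a \<in> carrier_vec m" "a \<bullet> a = 1" and b: "b \<in> carrier_vec m" "b \<bullet> b = 1"
    and ab: "a \<noteq> b"
  obtains w where "w \<in> carrier_vec m" "w \<bullet> w = 1" "reflection_mat m w *\<^sub>v a = b"
    "\<And>i. i < m \<Longrightarrow> a $ i = b $ i \<Longrightarrow> w $ i = 0"
proof -
  define d where "d = a - b"
  have d: "d \<in> carrier_vec m" and di: "\<And>i. i < m \<Longrightarrow> d $ i = a $ i - b $ i"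
    using a b unfolding d_def by auto
  have ba: "b \<bullet> a = a \<bullet> b" using a b comm_scalar_prod by blast
  have da: "d \<bullet> a = 1 - a \<bullet> b"
    unfolding d_def using a b ba by (simp add: minus_scalar_prod_distrib[of a m b a])
  have dd: "d \<bullet> d = 2 * (d \<bullet> a)"
    unfolding da unfolding d_def using a b ba
    by (simp add: minus_scalar_prod_distrib[of a m b] scalar_prod_minus_distrib[of _ m a b])
  have dd_sum: "d \<bullet> d = (\<Sum>i\<in>{0..<m}. d $ i * d $ i)" using d by (simp add: scalar_prod_def)
  have "d \<bullet> d \<noteq> 0"
  proof
    assume "d \<bullet> d = 0"
    then have "\<forall>i\<in>{0..<m}. d $ i * d $ i = 0"
      unfolding dd_sum by (subst (asm) sum_nonneg_eq_0_iff) auto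
    then have "a = b" using a b di by (intro eq_vecI) auto
    with ab show False ..
  qed
  then have dpos: "d \<bullet> d > 0" unfolding dd_sum
    by (metis dd_sum order_less_le sum_nonneg zero_le_square)
  define w where "w = (1 / sqrt (d \<bullet> d)) \<cdot>\<^sub>v d"
  have w: "w \<in> carrier_vec m" and wi: "\<And>i. i < m \<Longrightarrow> w $ i = d $ i / sqrt (d \<bullet> d)"
    using d unfolding w_def by auto
  have ww: "w \<bullet> w = 1" unfolding w_def using d dpos by simp
  have wa: "2 * (w \<bullet> a) * w $ i = d $ i" if "i < m" for i
    unfolding w_def using d a dpos dd that by (simp add: field_simps)
  have "reflection_mat m w *\<^sub>v a = b"
  proof (rule eq_vecI)
    fix i assume "i < dim_vec b"
    then have "i < m" using b by simp
    then show "(reflection_mat m w *\<^sub>v a) $ i = b $ i"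
      using wa di by (simp add: reflection_mat_mult_vec_index[OF w a(1)])
  qed (use b in \<open>simp add: reflection_mat_def\<close>)
  then show ?thesis using that w ww wi di by simp
qed

lemma reflection_mat_fixes_unit_vec:
  assumes u: "u \<in> carrier_vec m" and i: "i < m" "u $ i = 0"
  shows "reflection_mat m u *\<^sub>v unit_vec m i = unit_vec m i"
proof (rule eq_vecI)
  fix j assume "j < dim_vec (unit_vec m i :: real vec)"
  then have j: "j < m" by simp
  show "(reflection_mat m u *\<^sub>v unit_vec m i) $ j = unit_vec m i $ j"
    unfolding reflection_mat_mult_vec_index[OF u unit_vec_carrier j] using u i by simp
qed (simp add: reflection_mat_dim)

text \<open>The reflection swapping \<open>Q e\<^sub>k\<close> and \<open>e\<^sub>k\<close> fixes \<open>e\<^sub>0, \<dots>, e\<^bsub>k-1\<^esub>\<close>, since these are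
  orthogonal to both.\<close>

lemma orth_mat_fix_basis_step:
  assumes Q: "orth_mat m Q" and k: "k < m" and fixed: "\<forall>i<k. Q *\<^sub>v unit_vec m i = unit_vec m i"
  shows "(\<forall>i<Suc k. Q *\<^sub>v unit_vec m i = unit_vec m i) \<or>
    (\<exists>u. u \<in> carrier_vec m \<and> u \<bullet> u = 1 \<and>
      (\<forall>i<Suc k. (reflection_mat m u * Q) *\<^sub>v unit_vec m i = unit_vec m i))"
proof -
  have Qc: "Q \<in> carrier_mat m m" using Q orth_mat_carrier by auto
  define w where "w = Q *\<^sub>v unit_vec m k"
  have w: "w \<in> carrier_vec m" unfolding w_def using Qc by simp
  have ww: "w \<bullet> w = 1" unfolding w_def
    using orth_mat_inner[OF Q, of "unit_vec m k" "unit_vec m k"] k by simp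
  have w0: "w $ i = unit_vec m k $ i" if i: "i < k" for i
  proof -
    have "w $ i = (Q *\<^sub>v unit_vec m k) \<bullet> (Q *\<^sub>v unit_vec m i)"
      using fixed i k unfolding w_def by simp
    also have "\<dots> = unit_vec m k \<bullet> unit_vec m i" using orth_mat_inner[OF Q] i k by simp
    finally show ?thesis using i k by simp
  qed
  show ?thesis
  proof (cases "w = unit_vec m k")
    case True
    then show ?thesis using fixed unfolding w_def by (metis less_Suc_eq)
  next
    case False
    obtain u where u: "u \<in> carrier_vec m" "u \<bullet> u = 1" "reflection_mat m u *\<^sub>v w = unit_vec m k"
      and u0: "\<And>i. i < m \<Longrightarrow> w $ i = unit_vec m k $ i \<Longrightarrow> u $ i = 0"
      using reflection_swap[OF w ww _ _ False] k by auto
    have "(reflection_mat m u * Q) *\<^sub>v unit_vec m i = unit_vec m i" if i: "i < Suc k" for i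
    proof -
      have "(reflection_mat m u * Q) *\<^sub>v unit_vec m i = reflection_mat m u *\<^sub>v (Q *\<^sub>v unit_vec m i)"
        using Qc by (simp add: assoc_mult_mat_vec[of _ m m _ m])
      also have "\<dots> = unit_vec m i"
      proof (cases "i = k")
        case True
        then show ?thesis using u unfolding w_def by simp
      next
        case False
        then have ik: "i < k" using i by simp
        have "u $ i = 0" using u0[OF _ w0[OF ik]] ik k by simp
        then show ?thesis using reflection_mat_fixes_unit_vec[OF u(1)] fixed ik k by simp
      qed
      finally show ?thesis .
    qed
    then show ?thesis using u by blast
  qed
qed

text \<open>Cartan-Dieudonne, by induction on the number of basis vectors not yet fixed.\<close>

lemma pin_rho_surj_fixing:
  "k \<le> m \<Longrightarrow> orth_mat m Q \<Longrightarrow> \<forall>i<k. Q *\<^sub>v unit_vec m i = unit_vec m i \<Longrightarrow>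
    \<exists>x\<in>pin m. pin_rho m x = Q"
proof (induction "m - k" arbitrary: k Q)
  case 0
  then have Qc: "Q \<in> carrier_mat m m" and km: "k = m" using orth_mat_carrier by auto
  have "Q = 1\<^sub>m m"
  proof (rule eq_matI)
    fix i j assume i: "i < dim_row (1\<^sub>m m :: real mat)" and j: "j < dim_col (1\<^sub>m m :: real mat)"
    then have "Q $$ (i, j) = (Q *\<^sub>v unit_vec m j) $ i" using Qc by simp
    also have "\<dots> = unit_vec m j $ i" using 0 km j by simp
    finally show "Q $$ (i, j) = 1\<^sub>m m $$ (i, j)" using i j by simp
  qed (use Qc in auto)
  then show ?case using pin_rho_one pin.pin_one by blast
next
  case (Suc d)
  then have k: "k < m" by simp
  from orth_mat_fix_basis_step[OF Suc(4) k Suc(5)] show ?case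
  proof
    assume "\<forall>i<Suc k. Q *\<^sub>v unit_vec m i = unit_vec m i"
    then show ?thesis using Suc(1)[of "Suc k" Q] Suc(2) Suc(4) k by simp
  next
    assume "\<exists>u. u \<in> carrier_vec m \<and> u \<bullet> u = 1 \<and>
      (\<forall>i<Suc k. (reflection_mat m u * Q) *\<^sub>v unit_vec m i = unit_vec m i)"
    then obtain u where u: "u \<in> carrier_vec m" "u \<bullet> u = 1"
      and fixed: "\<forall>i<Suc k. (reflection_mat m u * Q) *\<^sub>v unit_vec m i = unit_vec m i" by auto
    have "orth_mat m (reflection_mat m u * Q)"
      using orth_mat_mult[OF orth_reflection_mat[OF u] Suc(4)] .
    moreover have "d = m - Suc k" using Suc(2) by arith
    ultimately obtain x where x: "x \<in> pin m" "pin_rho m x = reflection_mat m u * Q"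
      using Suc(1) fixed k by (metis Suc_leI)
    have Qc: "Q \<in> carrier_mat m m" using Suc(4) orth_mat_carrier by auto
    have "pin_rho m (cl_mult m (cl_vec m u) x) = reflection_mat m u * (reflection_mat m u * Q)"
      using pin_rho_mult[OF pin_vec[OF u] x(1)] pin_rho_vec[OF u] x(2) by simp
    also have "\<dots> = (reflection_mat m u * reflection_mat m u) * Q"
      using Qc by (simp add: assoc_mult_mat[of _ m m _ m _ m])
    also have "\<dots> = Q" using reflection_mat_involutive[OF u] Qc by simp
    finally show ?thesis using pin_mult[OF x(1) pin_vec[OF u]] by blast
  qed
qed

lemma pin_rho_surj: "orth_mat m Q \<Longrightarrow> \<exists>x\<in>pin m. pin_rho m x = Q"
  using pin_rho_surj_fixing[of 0 m Q] by simp

lemma pin_rho_orth: "x \<in> pin m \<Longrightarrow> orth_mat m (pin_rho m x)"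
proof (induction rule: pin.induct)
  case pin_one
  then show ?case by (simp add: pin_rho_one orth_mat_def)
next
  case (pin_step x v)
  then show ?case
    by (simp add: pin_rho_mult pin_vec pin_rho_vec orth_mat_mult orth_reflection_mat)
qed

lemma det_reflection_mat_unit_vec0:
  assumes m: "0 < m"
  shows "det (reflection_mat m (unit_vec m 0)) = -1"
proof -
  let ?R = "reflection_mat m (unit_vec m 0) :: real mat"
  have sign: "prod_list (map (\<lambda>i. if i = 0 then -1 else 1) [0..<Suc k]) = (-1 :: real)" for k
    by (induction k) auto
  have "upper_triangular ?R" unfolding upper_triangular_def reflection_mat_def by auto
  then have "det ?R = prod_list (diag_mat ?R)"
    by (rule det_upper_triangular) (rule reflection_mat_carrier)
  also have "diag_mat ?R = map (\<lambda>i. if i = 0 then -1 else 1) [0..<Suc (m - 1)]"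
    unfolding diag_mat_def reflection_mat_def using m by (auto simp: map_eq_conv)
  finally show ?thesis by (simp only: sign)
qed

lemma cl_vec_sandwich:
  assumes w: "w \<in> carrier_vec m" "w \<bullet> w = 1" and e: "e \<in> carrier_vec m"
  shows "cl_mult m (cl_mult m (cl_vec m w) (cl_vec m e)) (cl_vec m w)
    = cl_vec m (reflection_mat m w *\<^sub>v e)"
proof -
  have conj: "cl_scale (-1) (cl_mult m (cl_vec m w) (cl_vec m e))
      = cl_mult m (cl_vec m (reflection_mat m w *\<^sub>v e)) (cl_vec m w)"
    using cl_twisted_conj_vec[OF w e] by (simp add: cl_alpha_vec cl_mult_scale_left)
  have "cl_scale (-1) (cl_mult m (cl_mult m (cl_vec m w) (cl_vec m e)) (cl_vec m w))
      = cl_mult m (cl_scale (-1) (cl_mult m (cl_vec m w) (cl_vec m e))) (cl_vec m w)"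
    by (simp add: cl_mult_scale_left)
  also have "\<dots> = cl_mult m (cl_mult m (cl_vec m (reflection_mat m w *\<^sub>v e))
    (cl_vec m w)) (cl_vec m w)"
    by (simp only: conj)
  also have "\<dots> = cl_scale (-1) (cl_vec m (reflection_mat m w *\<^sub>v e))"
    by (simp add: cl_mult_assoc cl_vec_unit_sq[OF w] cl_mult_scale_right
      cl_mult_one_right cl_vec_in_space)
  finally show ?thesis
    by (simp add: cl_scale_cancel)
qed

text \<open>Every reflection is conjugate to the reflection in the first coordinate hyperplane.\<close>

lemma det_reflection_mat:
  assumes u: "u \<in> carrier_vec m" "u \<bullet> u = 1"
  shows "det (reflection_mat m u) = -1"
proof -
  have m: "0 < m" using u by (cases m) (auto simp: scalar_prod_def)
  let ?e = "unit_vec m 0 :: real vec"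
  have e: "?e \<in> carrier_vec m" "?e \<bullet> ?e = 1" using m by auto
  show ?thesis
  proof (cases "u = ?e")
    case True
    then show ?thesis using det_reflection_mat_unit_vec0[OF m] by simp
  next
    case False
    then obtain w where w: "w \<in> carrier_vec m" "w \<bullet> w = 1" "reflection_mat m w *\<^sub>v ?e = u"
      using reflection_swap[OF e u] by metis
    have "reflection_mat m u = pin_rho m (cl_vec m u)" using pin_rho_vec[OF u] by simp
    also have "cl_vec m u = cl_mult m (cl_mult m (cl_vec m w) (cl_vec m ?e)) (cl_vec m w)"
      using cl_vec_sandwich[OF w(1,2) e(1)] w(3) by simp
    also have "pin_rho m \<dots> = reflection_mat m w * reflection_mat m ?e * reflection_mat m w"
      using w e by (simp add: pin_rho_mult pin_vec pin_mult pin_rho_vec)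
    finally have "det (reflection_mat m u) = det (reflection_mat m ?e)
      * (det (reflection_mat m w) * det (reflection_mat m w))"
      by (simp add: det_mult[of _ m] mult_carrier_mat[of _ m m])
    also have "det (reflection_mat m w) * det (reflection_mat m w) = 1"
      using reflection_mat_involutive[OF w(1,2)] by (simp flip: det_mult[of _ m])
    finally show ?thesis using det_reflection_mat_unit_vec0[OF m] by simp
  qed
qed

lemma cl_alpha_pin: "x \<in> pin m \<Longrightarrow> cl_alpha x = cl_scale (det (pin_rho m x)) x"
proof (induction rule: pin.induct)
  case pin_one
  then show ?case by (simp add: pin_rho_one cl_alpha_one)
next
  case (pin_step x v)
  have "det (pin_rho m (cl_mult m x (cl_vec m v))) = det (pin_rho m x) * -1"
    using pin_step by (simp add: pin_rho_mult pin_vec pin_rho_vec pin_rho_carrier det_mult[of _ m]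
        det_reflection_mat)
  then show ?case
    using pin_step by (simp add: cl_alpha_mult cl_alpha_vec cl_mult_scale_left cl_mult_scale_right)
qed

section \<open>From \<open>Pin(n)\<close> to \<open>Pin(n+1)\<close>\<close>

definition extend_vec :: "nat \<Rightarrow> real vec \<Rightarrow> real vec" where
  "extend_vec n v = vec (Suc n) (\<lambda>i. if i < n then v $ i else 0)"

definition extend_mat :: "nat \<Rightarrow> real mat \<Rightarrow> real \<Rightarrow> real mat" where
  "extend_mat n A d = four_block_mat A (0\<^sub>m n 1) (0\<^sub>m 1 n) (mat 1 1 (\<lambda>_. d))"

lemma det_sum_eq: "det_sum n \<pi> g = extend_mat n (\<pi> g) (det (\<pi> g))"
  unfolding det_sum_def extend_mat_def ..

lemma extend_mat_one: "extend_mat n (1\<^sub>m n) 1 = 1\<^sub>m (Suc n)"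
  unfolding extend_mat_def by (rule eq_matI) auto

lemma extend_mat_mult:
  assumes A: "A \<in> carrier_mat n n" and B: "B \<in> carrier_mat n n"
  shows "extend_mat n A a * extend_mat n B b = extend_mat n (A * B) (a * b)"
proof -
  have "(0\<^sub>m n 1 :: real mat) \<in> carrier_mat n 1" "(0\<^sub>m 1 n :: real mat) \<in> carrier_mat 1 n"
    "mat 1 1 (\<lambda>_. a) \<in> carrier_mat 1 1" "mat 1 1 (\<lambda>_. b) \<in> carrier_mat 1 1" by auto
  with A B show ?thesis
    unfolding extend_mat_def
    by (subst mult_four_block_mat) (auto intro!: cong_four_block_mat eq_matI simp: scalar_prod_def)
qed

lemma extend_mat_inj:
  assumes "A \<in> carrier_mat n n" "B \<in> carrier_mat n n" "extend_mat n A a = extend_mat n B b"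
  shows "A = B"
proof (rule eq_matI)
  fix i j assume ij: "i < dim_row B" "j < dim_col B"
  have "extend_mat n M c $$ (i, j) = M $$ (i, j)" if "M \<in> carrier_mat n n" for M c
    using that ij assms(2) unfolding extend_mat_def by (simp add: index_mat_four_block)
  then show "A $$ (i, j) = B $$ (i, j)" using assms by metis
qed (use assms in auto)

lemma reflection_mat_extend_vec:
  "reflection_mat (Suc n) (extend_vec n v) = extend_mat n (reflection_mat n v) 1"
  unfolding extend_mat_def reflection_mat_def extend_vec_def by (rule eq_matI) auto

lemma cl_vec_extend_vec: "cl_vec (Suc n) (extend_vec n v) = cl_vec n v"
  unfolding cl_vec_def extend_vec_def by (rule ext) (auto simp: less_Suc_eq)

lemma extend_vec_inner: "v \<in> carrier_vec n \<Longrightarrow> extend_vec n v \<bullet> extend_vec n v = v \<bullet> v"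
  unfolding extend_vec_def scalar_prod_def by simp

lemma cl_mult_Suc:
  assumes x: "x \<in> cl_space n" and y: "y \<in> cl_space n"
  shows "cl_mult (Suc n) x y = cl_mult n x y"
proof (rule ext)
  fix C
  let ?f = "\<lambda>A. cl_sign A (sym_diff A C) * x A * y (sym_diff A C)"
  have "(\<Sum>A\<in>Pow {..<Suc n}. ?f A) = (\<Sum>A\<in>Pow {..<n}. ?f A)"
    by (rule sum.mono_neutral_right) (use x in \<open>auto simp: cl_space_def\<close>)
  moreover have "?f A = 0" if C: "\<not> C \<subseteq> {..<n}" for A
  proof (cases "A \<subseteq> {..<n}")
    case True
    then have "\<not> sym_diff A C \<subseteq> {..<n}" using C by blast
    then show ?thesis using y unfolding cl_space_def by simp
  next
    case False
    then show ?thesis using x unfolding cl_space_def by simp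
  qed
  ultimately show "cl_mult (Suc n) x y C = cl_mult n x y C"
    by (cases "C \<subseteq> {..<n}") (auto simp: cl_mult_apply intro: sum.neutral)
qed

lemma pin_Suc: "x \<in> pin n \<Longrightarrow> x \<in> pin (Suc n) \<and> pin_rho (Suc n) x = extend_mat n (pin_rho n x) 1"
proof (induction rule: pin.induct)
  case pin_one
  then show ?case by (simp add: pin.pin_one pin_rho_one extend_mat_one)
next
  case (pin_step x v)
  have ev: "extend_vec n v \<in> carrier_vec (Suc n)" "extend_vec n v \<bullet> extend_vec n v = 1"
    using pin_step extend_vec_inner by (simp_all add: extend_vec_def)
  have eq: "cl_mult n x (cl_vec n v) = cl_mult (Suc n) x (cl_vec (Suc n) (extend_vec n v))"
    using pin_in_space[OF pin_step(1)] by (simp add: cl_vec_extend_vec cl_mult_Suc cl_vec_in_space)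
  have "pin_rho (Suc n) (cl_mult (Suc n) x (cl_vec (Suc n) (extend_vec n v)))
      = extend_mat n (pin_rho n x) 1 * extend_mat n (reflection_mat n v) 1"
    using pin_step ev by (simp add: pin_rho_mult pin_vec pin_rho_vec reflection_mat_extend_vec)
  also have "\<dots> = extend_mat n (pin_rho n (cl_mult n x (cl_vec n v))) 1"
    using pin_step by (simp add: extend_mat_mult pin_rho_carrier pin_rho_mult pin_vec pin_rho_vec)
  finally show ?case
    using pin_step ev unfolding eq by (simp add: pin_mult pin_vec)
qed

abbreviation cl_last :: "nat \<Rightarrow> cl" where
  "cl_last n \<equiv> cl_vec (Suc n) (unit_vec (Suc n) n)"

lemma reflection_mat_last: "reflection_mat (Suc n) (unit_vec (Suc n) n) = extend_mat n (1\<^sub>m n) (-1)"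
  unfolding extend_mat_def reflection_mat_def by (rule eq_matI) auto

lemma cl_last_sq: "cl_mult (Suc n) (cl_last n) (cl_last n) = cl_scale (-1) cl_one"
  by (rule cl_vec_unit_sq) auto

lemma cl_sign_last_left: "B \<subseteq> {..<n} \<Longrightarrow> cl_sign {n} B = card_sign B"
proof -
  assume B: "B \<subseteq> {..<n}"
  then have "inversions {n} B = Pair n ` B" "{n} \<inter> B = {}" unfolding inversions_def by auto
  then show ?thesis unfolding cl_sign_eq card_sign_def by (simp add: card_image inj_on_def)
qed

lemma cl_sign_last_right: "B \<subseteq> {..<n} \<Longrightarrow> cl_sign B {n} = 1"
proof -
  assume B: "B \<subseteq> {..<n}"
  then have "inversions B {n} = {}" "B \<inter> {n} = {}" unfolding inversions_def by auto
  then show ?thesis unfolding cl_sign_eq card_sign_def by simp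
qed

lemma cl_last_commute:
  assumes x: "x \<in> cl_space n"
  shows "cl_mult (Suc n) (cl_last n) x = cl_mult (Suc n) (cl_alpha x) (cl_last n)"
proof (rule ext)
  fix C
  have n: "{n} \<subseteq> {..<Suc n}" by auto
  let ?B = "sym_diff {n} C"
  have "cl_sign {n} ?B * x ?B = cl_sign ?B {n} * cl_alpha x ?B"
  proof (cases "?B \<subseteq> {..<n}")
    case True
    then show ?thesis by (simp add: cl_sign_last_left cl_sign_last_right cl_alpha_def card_sign_def)
  next
    case False
    then show ?thesis using x unfolding cl_space_def cl_alpha_def by simp
  qed
  then show "cl_mult (Suc n) (cl_last n) x C = cl_mult (Suc n) (cl_alpha x) (cl_last n) C"
    by (simp add: cl_vec_unit_vec cl_mult_blade_left[OF n] cl_mult_blade_right[OF n])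
qed

definition pin_lift :: "nat \<Rightarrow> cl \<Rightarrow> cl" where
  "pin_lift n x = (if det (pin_rho n x) = -1 then cl_mult (Suc n) x (cl_last n) else x)"

lemma det_pin_rho: "x \<in> pin n \<Longrightarrow> det (pin_rho n x) = 1 \<or> det (pin_rho n x) = -1"
  using orth_mat_det pin_rho_orth by blast

lemma pin_lift_pin:
  assumes x: "x \<in> pin n"
  shows "pin_lift n x \<in> pin (Suc n)"
    and "pin_rho (Suc n) (pin_lift n x) = extend_mat n (pin_rho n x) (det (pin_rho n x))"
proof -
  have e: "unit_vec (Suc n) n \<in> carrier_vec (Suc n)"
    "unit_vec (Suc n) n \<bullet> unit_vec (Suc n) n = (1::real)"
    by auto
  have xS: "x \<in> pin (Suc n)" "pin_rho (Suc n) x = extend_mat n (pin_rho n x) 1"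
    using pin_Suc[OF x] by auto
  show "pin_lift n x \<in> pin (Suc n)"
    using xS e unfolding pin_lift_def by (simp add: pin.pin_step)
  have "pin_rho (Suc n) (cl_mult (Suc n) x (cl_last n)) = extend_mat n (pin_rho n x) (-1)"
    using xS e pin_rho_carrier[OF x]
    by (simp add: pin_rho_mult pin_vec pin_rho_vec reflection_mat_last extend_mat_mult)
  then show "pin_rho (Suc n) (pin_lift n x) = extend_mat n (pin_rho n x) (det (pin_rho n x))"
    using xS det_pin_rho[OF x] unfolding pin_lift_def by auto
qed

lemma pin_lift_mult:
  assumes x: "x \<in> pin n" and y: "y \<in> pin n"
  shows "pin_lift n (cl_mult n x y) = cl_mult (Suc n) (pin_lift n x) (pin_lift n y)"
proof -
  let ?dx = "det (pin_rho n x)" and ?dy = "det (pin_rho n y)"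
  have det_xy: "det (pin_rho n (cl_mult n x y)) = ?dx * ?dy"
    using x y by (simp add: pin_rho_mult pin_rho_carrier det_mult[of _ n])
  have xy: "cl_mult (Suc n) x y = cl_mult n x y"
    using x y by (simp add: cl_mult_Suc pin_in_space)
  have last_y: "cl_mult (Suc n) (cl_last n) y = cl_scale ?dy (cl_mult (Suc n) y (cl_last n))"
    using cl_last_commute[OF pin_in_space[OF y]] cl_alpha_pin[OF y]
      by (simp add: cl_mult_scale_left)
  have y1: "cl_mult (Suc n) y cl_one = y"
    using y by (simp add: cl_mult_one_right cl_space_Suc pin_in_space)
  consider "?dx = 1" "?dy = 1" | "?dx = 1" "?dy = -1" | "?dx = -1" "?dy = 1" | "?dx = -1" "?dy = -1"
    using det_pin_rho[OF x] det_pin_rho[OF y] by blast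
  then show ?thesis
  proof cases
    case 4
    have "cl_mult (Suc n) (cl_mult (Suc n) x (cl_last n)) (cl_mult (Suc n) y (cl_last n))
        = cl_mult (Suc n) x (cl_mult (Suc n) (cl_mult (Suc n) (cl_last n) y) (cl_last n))"
      by (simp add: cl_mult_assoc)
    also have "\<dots> = cl_mult (Suc n) x y"
      using 4 by (simp add: last_y cl_mult_scale_left cl_mult_scale_right
        cl_mult_assoc cl_last_sq y1)
    finally show ?thesis using 4 det_xy xy unfolding pin_lift_def by simp
  qed (use det_xy last_y in \<open>simp_all add: pin_lift_def cl_mult_assoc flip: xy\<close>)
qed

lemma pin_lift_inj:
  assumes x: "x \<in> pin n" and y: "y \<in> pin n" and eq: "pin_lift n x = pin_lift n y"
  shows "x = y"
proof -
  have "extend_mat n (pin_rho n x) (det (pin_rho n x))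
    = extend_mat n (pin_rho n y) (det (pin_rho n y))"
    using pin_lift_pin(2)[OF x] pin_lift_pin(2)[OF y] eq by simp
  then have rho: "pin_rho n x = pin_rho n y"
    using extend_mat_inj pin_rho_carrier x y by blast
  have undo: "cl_mult (Suc n) (cl_mult (Suc n) z (cl_last n)) (cl_last n) = cl_scale (-1) z"
    if "z \<in> pin n" for z
    using that by (simp add: cl_mult_assoc cl_last_sq cl_mult_scale_right cl_mult_one_right
        cl_space_Suc pin_in_space)
  show ?thesis
  proof (cases "det (pin_rho n x) = -1")
    case True
    then have "cl_scale (-1) x = cl_scale (-1) y"
      using eq rho undo[OF x] undo[OF y] unfolding pin_lift_def by metis
    then show ?thesis by (simp add: cl_scale_cancel)
  qed (use eq rho in \<open>simp add: pin_lift_def\<close>)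
qed

text \<open>\<open>0 < n\<close> is needed so that \<open>-x \<in> Pin(n)\<close> can absorb the sign left open by the kernel
  of \<open>\<rho>\<close>; \<open>Pin(0)\<close> is \<open>{1}\<close>.\<close>

lemma pin_lift_surj:
  assumes n: "0 < n" and y: "y \<in> pin (Suc n)" and A: "orth_mat n A"
    and rho: "pin_rho (Suc n) y = extend_mat n A (det A)"
  obtains x where "x \<in> pin n" "pin_rho n x = A" "pin_lift n x = y"
proof -
  obtain x where x: "x \<in> pin n" "pin_rho n x = A" using pin_rho_surj[OF A] by blast
  have "y = pin_lift n x \<or> y = cl_scale (-1) (pin_lift n x)"
    using pin_rho_eq_imp_sign[OF y pin_lift_pin(1)[OF x(1)]] pin_lift_pin(2)[OF x(1)]
      x(2) rho by simp
  moreover have "pin_lift n (cl_scale (-1) x) = cl_scale (-1) (pin_lift n x)"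
    using x n unfolding pin_lift_def by (simp add: pin_rho_uminus cl_mult_scale_left)
  ultimately show ?thesis
    using that x pin_uminus[OF x(1) n] pin_rho_uminus[OF x(1) n] by metis
qed

lemma spinorial_det_sum:
  assumes "spinorial G n \<pi>"
  shows "spinorial G (Suc n) (det_sum n \<pi>)"
proof -
  obtain \<phi> where \<phi>: "\<And>g. g \<in> carrier G \<Longrightarrow> \<phi> g \<in> pin n \<and> pin_rho n (\<phi> g) = \<pi> g"
    and hom: "\<And>g h. g \<in> carrier G \<Longrightarrow> h \<in> carrier G \<Longrightarrow> \<phi> (g \<otimes>\<^bsub>G\<^esub> h) = cl_mult n (\<phi> g) (\<phi> h)"
    using assms unfolding spinorial_def by blast
  show ?thesis
    unfolding spinorial_def det_sum_eq
    by (rule exI[of _ "pin_lift n \<circ> \<phi>"]) (use \<phi> hom in \<open>auto simp: pin_lift_pin pin_lift_mult\<close>)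
qed

lemma spinorial_dim_0: "orth_rep G 0 \<pi> \<Longrightarrow> spinorial G 0 \<pi>"
proof -
  assume "orth_rep G 0 \<pi>"
  then have "\<pi> g \<in> carrier_mat 0 0" if "g \<in> carrier G" for g
    using that unfolding orth_rep_def orth_mat_def by blast
  then have "\<pi> g = 1\<^sub>m 0" if "g \<in> carrier G" for g
    using that by (intro eq_matI) auto
  then show "spinorial G 0 \<pi>"
    unfolding spinorial_def
    by (intro exI[of _ "\<lambda>_. cl_one"])
      (simp add: pin.pin_one pin_rho_one cl_mult_one_left cl_one_in_space)
qed

lemma spinorial_of_det_sum:
  assumes G: "monoid G" and \<pi>: "orth_rep G n \<pi>" and n: "0 < n"
    and "spinorial G (Suc n) (det_sum n \<pi>)"
  shows "spinorial G n \<pi>"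
proof -
  obtain \<psi> where \<psi>: "\<And>g. g \<in> carrier G \<Longrightarrow> \<psi> g \<in> pin (Suc n) \<and> pin_rho (Suc n) (\<psi> g) = det_sum n \<pi> g"
    and hom: "\<And>g h. g \<in> carrier G \<Longrightarrow> h \<in> carrier G \<Longrightarrow> \<psi> (g \<otimes>\<^bsub>G\<^esub> h) = cl_mult (Suc n) (\<psi> g) (\<psi> h)"
    using assms(4) unfolding spinorial_def by blast
  define \<phi> where "\<phi> g = (SOME x. x \<in> pin n \<and> pin_rho n x = \<pi> g \<and> pin_lift n x = \<psi> g)" for g
  have \<phi>: "\<phi> g \<in> pin n \<and> pin_rho n (\<phi> g) = \<pi> g \<and> pin_lift n (\<phi> g) = \<psi> g" if g: "g \<in> carrier G" for g
  proof -
    have "orth_mat n (\<pi> g)" using \<pi> g unfolding orth_rep_def by blast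
    with \<psi>[OF g] obtain x where "x \<in> pin n" "pin_rho n x = \<pi> g" "pin_lift n x = \<psi> g"
      using pin_lift_surj[OF n] unfolding det_sum_eq by metis
    then have "\<exists>x. x \<in> pin n \<and> pin_rho n x = \<pi> g \<and> pin_lift n x = \<psi> g" by blast
    then show ?thesis unfolding \<phi>_def by (rule someI_ex)
  qed
  have "\<phi> (g \<otimes>\<^bsub>G\<^esub> h) = cl_mult n (\<phi> g) (\<phi> h)" if g: "g \<in> carrier G" and h: "h \<in> carrier G" for g h
  proof (rule pin_lift_inj)
    have gh: "g \<otimes>\<^bsub>G\<^esub> h \<in> carrier G" using G g h by (simp add: monoid.m_closed)
    show "\<phi> (g \<otimes>\<^bsub>G\<^esub> h) \<in> pin n" "cl_mult n (\<phi> g) (\<phi> h) \<in> pin n"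
      using \<phi> g h gh by (auto intro: pin_mult)
    show "pin_lift n (\<phi> (g \<otimes>\<^bsub>G\<^esub> h)) = pin_lift n (cl_mult n (\<phi> g) (\<phi> h))"
      using \<phi> g h gh hom by (simp add: pin_lift_mult)
  qed
  then show ?thesis unfolding spinorial_def using \<phi> by blast
qed

theorem lemma6p2:
  fixes G :: "('g, 'b) monoid_scheme" and n :: nat and \<pi> :: "'g \<Rightarrow> real mat"
  assumes "group G" and "finite (carrier G)" and "orth_rep G n \<pi>"
  shows "spinorial G n \<pi> \<longleftrightarrow> spinorial G (Suc n) (det_sum n \<pi>)"
proof
  assume "spinorial G n \<pi>"
  then show "spinorial G (Suc n) (det_sum n \<pi>)" by (rule spinorial_det_sum)
next
  assume lifted: "spinorial G (Suc n) (det_sum n \<pi>)"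
  show "spinorial G n \<pi>"
  proof (cases "n = 0")
    case True
    then show ?thesis using spinorial_dim_0 assms(3) by simp
  next
    case False
    then show ?thesis
      using spinorial_of_det_sum[OF group.is_monoid[OF assms(1)] assms(3) _ lifted] by simp
  qed
qed

end
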